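(* Let $p$ be a prime and let $\theta\in\mathbb{F}_p((X^{-1}))$ be a counterexample to the $X$-adic Littlewood conjecture over $\mathbb{F}_p$ with finite deficiency $D(\theta)\in\mathbb{N}_0$, i.e. for every $r\ge0$ all partial quotients $A^{(r)}_j$ of the simple continued fraction expansion of $\langle X^r\theta\rangle$ satisfy $\deg(A^{(r)}_j)\le D(\theta)+1$. Then for every $m>D(\theta)$ the digital $(D(\theta),m,3)$-net $(\boldsymbol{x}_n)_{0\le n<p^m}$ over $\mathbb{F}_p$ generated by $I^{(m)}$, $H^{(m)}(\theta)$ and $J^{(m)}$ is $(D(\theta)+3)$-admissible, i.e. $$\min_{0\le k<n<p^m}\|\boldsymbol{x}_k\ominus\boldsymbol{x}_n\|_p>p^{-m-D(\theta)-3}.$$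
   Context: $\mathbb{F}_p((X^{-1}))$ is the field of formal Laurent series $\theta=\sum_{i=j}^\infty a_iX^{-i}$ over $\mathbb{F}_p$, with $|\theta|=2^{-j}$ for $a_j\ne0$, fractional part $\langle\theta\rangle=\sum_{i\ge\max\{1,j\}}a_iX^{-i}$, $\|\theta\|=|\langle\theta\rangle|$; $\theta$ is a counterexample to the $X$-adic Littlewood conjecture if $\inf_{r\ge0,Q\in\mathbb{F}_p[X]\setminus\{0\}}|Q|\cdot\|X^rQ\theta\|>0$. Matrices (rows indexed by $1,2,\dots$, columns by $0,\dots,m-1$): $I^{(m)}$ has entry $1$ in row $k$, column $k-1$, else $0$; $H^{(m)}(\theta)$ has entry $a_{k+l}$ in row $k$, column $l$ (with $a_i=0$ for $1\le i<j$); $J^{(m)}$ has entry $1$ in row $k$, column $m-k$ for $1\le k\le m$, else $0$. Point set: for $0\le n<p^m$ with base-$p$ digit vector $\vec n=(n_0,\dots,n_{m-1})^T$, $C_i\vec n=(y^{(i)}_1,y^{(i)}_2,\dots)^T$ mod $p$ ($C_1=I^{(m)},C_2=H^{(m)}(\theta),C_3=J^{(m)}$), $x^{(i)}_n=\sum_k y^{(i)}_kp^{-k}$, $\boldsymbol{x}_n=(x^{(1)}_n,x^{(2)}_n,x^{(3)}_n)$. For $\boldsymbol{x}=(x^{(1)},x^{(2)},x^{(3)})$ with digit expansions $x^{(i)}=\sum_{j\ge1}x^{(i)}_jp^{-j}$, $\|\boldsymbol{x}\|_p=p^{-l}$ with $l=\sum_{i=1}^3\min\{j\in\mathbb{N}:x^{(i)}_j\neq0\}$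 (minimum of the empty set being $\infty$, so $\|\boldsymbol{x}\|_p=0$ if some coordinate is $0$). $\ominus$ is componentwise digit-wise subtraction modulo $p$: $x^{(i)}_k\ominus x^{(i)}_n=\sum_{j\ge1}\big((x^{(i)}_{k,j}-x^{(i)}_{n,j})\bmod p\big)p^{-j}$. *)

theory Defs
  imports "HOL-Computational_Algebra.Formal_Laurent_Series" "Berlekamp_Zassenhaus.Finite_Field"
begin

text \<open>Laurent series in X^{-1} over F_p are modelled as 'a fls in the variable T = X^{-1}:
  theta = sum_i a_i X^{-i} corresponds to the fls with (theta $$ i) = a_i.\<close>

definition fls_abs :: "'a::zero fls \<Rightarrow> real" where
  "fls_abs f = (if f = 0 then 0 else 2 powr (- real_of_int (fls_subdegree f)))"

text \<open>fractional part: keep the coefficients of X^{-i}, i >= 1\<close>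
definition fls_frac :: "'a::zero fls \<Rightarrow> 'a fls" where
  "fls_frac f = fls_shift (-1) (fps_to_fls (fls_regpart (fls_shift 1 f)))"

definition fls_dist_int :: "'a::zero fls \<Rightarrow> real" where
  "fls_dist_int f = fls_abs (fls_frac f)"

text \<open>polynomial (integral) part, as a polynomial in X\<close>
definition fls_intpart :: "'a::zero fls \<Rightarrow> 'a poly" where
  "fls_intpart f = Polynomial.Poly (map (\<lambda>k. fls_nth f (- int k)) [0..<nat (- fls_subdegree f) + 1])"

definition poly_to_fls :: "'a::comm_ring_1 poly \<Rightarrow> 'a fls" where
  "poly_to_fls Q = (\<Sum>k\<le>Polynomial.degree Q. fls_const (Polynomial.coeff Q k) * fls_X_inv ^ k)"

definition poly_abs :: "'a::zero poly \<Rightarrow> real" where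
  "poly_abs Q = (if Q = 0 then 0 else 2 ^ Polynomial.degree Q)"

definition XadicLC_counterexample :: "'a::field fls \<Rightarrow> bool" where
  "XadicLC_counterexample \<theta> \<longleftrightarrow>
     (INF rQ \<in> {(r::nat, Q::'a poly). Q \<noteq> 0}.
        poly_abs (snd rQ) * fls_dist_int (fls_X_inv ^ fst rQ * poly_to_fls (snd rQ) * \<theta>)) > 0"

text \<open>continued fraction expansion of phi (with |phi| < 1): complete-quotient remainders
  phi_0 = phi, phi_{n+1} = <1/phi_n>; partial quotient A_{n+1} = integral part of 1/phi_n,
  defined as long as phi_n is nonzero.\<close>
fun cf_rem :: "'a::field fls \<Rightarrow> nat \<Rightarrow> 'a fls" where
  "cf_rem \<phi> 0 = \<phi>"
| "cf_rem \<phi> (Suc n) = fls_frac (inverse (cf_rem \<phi> n))"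

definition cf_exists :: "'a::field fls \<Rightarrow> nat \<Rightarrow> bool" where
  "cf_exists \<phi> j \<longleftrightarrow> 1 \<le> j \<and> cf_rem \<phi> (j - 1) \<noteq> 0"

definition cf_pq :: "'a::field fls \<Rightarrow> nat \<Rightarrow> 'a poly" where
  "cf_pq \<phi> j = fls_intpart (inverse (cf_rem \<phi> (j - 1)))"

definition deficiency_bound :: "'a::field fls \<Rightarrow> nat \<Rightarrow> bool" where
  "deficiency_bound \<theta> D \<longleftrightarrow>
     (\<forall>r::nat. \<forall>j. cf_exists (fls_frac (fls_X_inv ^ r * \<theta>)) j \<longrightarrow>
        Polynomial.degree (cf_pq (fls_frac (fls_X_inv ^ r * \<theta>)) j) \<le> D + 1)"

text \<open>generating matrices, rows k = 1,2,..., columns l = 0..m-1\<close>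
definition I_mat :: "nat \<Rightarrow> nat \<Rightarrow> nat \<Rightarrow> 'a::{zero,one}" where
  "I_mat m k l = (if l < m \<and> k = l + 1 then 1 else 0)"

definition H_mat :: "nat \<Rightarrow> 'a::zero fls \<Rightarrow> nat \<Rightarrow> nat \<Rightarrow> 'a" where
  "H_mat m \<theta> k l = (if 1 \<le> k \<and> l < m then fls_nth \<theta> (int (k + l)) else 0)"

definition J_mat :: "nat \<Rightarrow> nat \<Rightarrow> nat \<Rightarrow> 'a::{zero,one}" where
  "J_mat m k l = (if 1 \<le> k \<and> k \<le> m \<and> l = m - k then 1 else 0)"

definition pdigit :: "nat \<Rightarrow> nat \<Rightarrow> nat \<Rightarrow> nat" where
  "pdigit p n l = n div p ^ l mod p"

definition gen_digits :: "nat \<Rightarrow> (nat \<Rightarrow> nat \<Rightarrow> 'p::prime_card mod_ring) \<Rightarrow> nat \<Rightarrow> nat \<Rightarrow> 'p mod_ring" where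
  "gen_digits m C n k = (\<Sum>l<m. C k l * of_nat (pdigit CARD('p) n l))"

text \<open>a point of [0,1)^3 given by its digit expansions: x i j = j-th digit of coordinate i
  (i in {1,2,3}, j >= 1)\<close>
definition net_point :: "nat \<Rightarrow> 'p::prime_card mod_ring fls \<Rightarrow> nat \<Rightarrow> nat \<Rightarrow> nat \<Rightarrow> 'p mod_ring" where
  "net_point m \<theta> n i =
     (if i = 1 then gen_digits m (I_mat m) n
      else if i = 2 then gen_digits m (H_mat m \<theta>) n
      else gen_digits m (J_mat m) n)"

definition digit_ominus :: "(nat \<Rightarrow> nat \<Rightarrow> 'a::ab_group_add) \<Rightarrow> (nat \<Rightarrow> nat \<Rightarrow> 'a) \<Rightarrow> nat \<Rightarrow> nat \<Rightarrow> 'a" where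
  "digit_ominus x y i j = x i j - y i j"

definition p_norm :: "nat \<Rightarrow> (nat \<Rightarrow> nat \<Rightarrow> 'a::zero) \<Rightarrow> real" where
  "p_norm p x =
     (if \<exists>i\<in>{1,2,3::nat}. \<forall>j\<ge>1. x i j = 0 then 0
      else 1 / real p ^ (\<Sum>i\<in>{1,2,3::nat}. LEAST j. 1 \<le> j \<and> x i j \<noteq> 0))"

end

theory Submission
  imports Defs
begin

(* Let \<phi>\<^sub>0 = \<langle>X^r \<theta>\<rangle>, \<phi>\<^sub>n\<^sub>+\<^sub>1 = \<langle>1/\<phi>\<^sub>n\<rangle> be the continued fraction remainders; the degree of the
   partial quotient [1/\<phi>\<^sub>n] is the valuation of \<phi>\<^sub>n, so it is at most D + 1, and no remainder
   vanishes because \<theta> is not rational (it is a counterexample). For a nonzero polynomial Q split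
   Q \<phi>\<^sub>0 = P + \<langle>Q \<phi>\<^sub>0\<rangle>; then \<langle>Q \<phi>\<^sub>0\<rangle> = -\<phi>\<^sub>0 (P/\<phi>\<^sub>0 - Q), where P has smaller degree than Q and
   P/\<phi>\<^sub>0 - Q differs from \<langle>P \<phi>\<^sub>1\<rangle> by a polynomial. Induction on deg Q gives |\<langle>Q \<phi>\<^sub>0\<rangle>| \<ge> 2^-(D+1)/|Q|.
   For two distinct points of the net let d be the digit difference of their indices, supported
   on [a, b]. The first coordinate of the difference has a nonzero digit at a + 1, the third at
   m - b, and the second coordinate is \<langle>Q X^a \<theta>\<rangle> with Q = \<Sigma> d\<^sub>l X^(l-a) of degree b - a, which has a
   nonzero digit at position at most D + 1 + b - a. The three positions add up to m + D + 2. *)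

unbundle fps_syntax

definition fls_is_poly :: "'a::zero fls \<Rightarrow> bool" where
  "fls_is_poly f \<longleftrightarrow> (\<forall>k>0. f $$ k = 0)"

definition fls_poly_part :: "'a::ab_group_add fls \<Rightarrow> 'a fls" where
  "fls_poly_part f = f - fls_frac f"

lemma fls_frac_nth [simp]: "fls_frac f $$ k = (if 1 \<le> k then f $$ k else 0)"
  unfolding fls_frac_def by auto

lemma fls_poly_part_nth: "fls_poly_part f $$ k = (if k \<le> 0 then f $$ k else 0)"
  unfolding fls_poly_part_def by auto

lemma fls_poly_part_plus_frac [simp]: "fls_poly_part f + fls_frac f = f"
  unfolding fls_poly_part_def by simp

lemma fls_frac_frac [simp]: "fls_frac (fls_frac f) = fls_frac f"
  by (intro fls_eqI) simp

lemma fls_is_poly_poly_part: "fls_is_poly (fls_poly_part f)"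
  unfolding fls_is_poly_def by (simp add: fls_poly_part_nth)

lemma fls_is_poly_1: "fls_is_poly 1"
  unfolding fls_is_poly_def by simp

lemma fls_is_poly_add: "fls_is_poly f \<Longrightarrow> fls_is_poly g \<Longrightarrow> fls_is_poly (f + g)"
  unfolding fls_is_poly_def by simp

lemma fls_is_poly_diff: "fls_is_poly f \<Longrightarrow> fls_is_poly g \<Longrightarrow> fls_is_poly (f - g)"
  unfolding fls_is_poly_def by simp

lemma fls_is_poly_mult:
  fixes f g :: "'a::comm_ring_1 fls"
  assumes f: "fls_is_poly f" and g: "fls_is_poly g"
  shows "fls_is_poly (f * g)"
  unfolding fls_is_poly_def
proof (intro allI impI)
  fix k :: int assume "k > 0"
  have "(f * g) $$ k = (\<Sum>i=fls_subdegree f..k - fls_subdegree g. f $$ i * g $$ (k - i))"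
    by (rule fls_times_nth(2))
  also have "\<dots> = 0"
  proof (intro sum.neutral ballI)
    fix i
    show "f $$ i * g $$ (k - i) = 0"
      using f g \<open>k > 0\<close> unfolding fls_is_poly_def by (cases "i > 0") auto
  qed
  finally show "(f * g) $$ k = 0" .
qed

lemma fls_is_poly_iff_frac_eq_0: "fls_is_poly f \<longleftrightarrow> fls_frac f = 0"
  unfolding fls_is_poly_def fls_eq_iff by auto

lemma fls_frac_add_poly: "fls_is_poly g \<Longrightarrow> fls_frac (f + g) = fls_frac f"
  unfolding fls_is_poly_def by (intro fls_eqI) simp

lemma fls_frac_mult_frac:
  fixes Q f :: "'a::comm_ring_1 fls"
  assumes "fls_is_poly Q"
  shows "fls_frac (Q * fls_frac f) = fls_frac (Q * f)"
proof -
  have "Q * f = Q * fls_frac f + Q * fls_poly_part f"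
    unfolding fls_poly_part_def by (simp add: algebra_simps)
  then have "fls_frac (Q * f) = fls_frac (Q * fls_frac f + Q * fls_poly_part f)"
    by (rule arg_cong)
  also have "\<dots> = fls_frac (Q * fls_frac f)"
    using assms by (intro fls_frac_add_poly fls_is_poly_mult fls_is_poly_poly_part)
  finally show ?thesis
    by (rule sym)
qed

lemma fls_subdegree_frac_ge_1: "fls_frac f \<noteq> 0 \<Longrightarrow> 1 \<le> fls_subdegree (fls_frac f)"
  by (intro fls_subdegree_geI) auto

lemma fls_subdegree_poly_le_0: "fls_is_poly f \<Longrightarrow> f \<noteq> 0 \<Longrightarrow> fls_subdegree f \<le> 0"
  unfolding fls_is_poly_def using nth_fls_subdegree_nonzero by force

lemma fls_subdegree_poly_part:
  assumes "fls_poly_part f \<noteq> 0"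
  shows "fls_subdegree (fls_poly_part f) = fls_subdegree f"
proof (cases "fls_frac f = 0")
  case False
  have "fls_subdegree (fls_poly_part f) < fls_subdegree (fls_frac f)"
    using fls_subdegree_poly_le_0[OF fls_is_poly_poly_part assms] fls_subdegree_frac_ge_1[OF False]
    by simp
  then show ?thesis
    using fls_subdegree_add_eq1[OF assms, of "fls_frac f"] by simp
qed (simp add: fls_poly_part_def)

lemma fls_frac_plus_poly:
  assumes "fls_frac f \<noteq> 0" and "fls_is_poly g"
  shows "fls_frac f + g \<noteq> 0" and "fls_subdegree (fls_frac f + g) \<le> fls_subdegree (fls_frac f)"
proof -
  define v where "v = fls_subdegree (fls_frac f)"
  have "1 \<le> v"
    unfolding v_def using assms(1) by (rule fls_subdegree_frac_ge_1)
  then have "g $$ v = 0"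
    using assms(2) unfolding fls_is_poly_def by simp
  moreover have "fls_frac f $$ v \<noteq> 0"
    unfolding v_def using assms(1) by (rule nth_fls_subdegree_nonzero)
  ultimately have "(fls_frac f + g) $$ v \<noteq> 0"
    by simp
  then show "fls_frac f + g \<noteq> 0" and "fls_subdegree (fls_frac f + g) \<le> v"
    by (rule fls_nonzeroI, rule fls_subdegree_leI)
qed

lemma cf_rem_Suc': "cf_rem \<phi> (Suc n) = cf_rem (fls_frac (inverse \<phi>)) n"
  by (induction n) simp_all

lemma fls_frac_cf_rem: "fls_frac \<phi> = \<phi> \<Longrightarrow> fls_frac (cf_rem \<phi> n) = cf_rem \<phi> n"
  by (cases n) simp_all

(* The partial quotient A\<^sub>n\<^sub>+\<^sub>1 = [1/\<phi>\<^sub>n] has degree equal to the valuation of \<phi>\<^sub>n = cf_rem \<phi> n. *)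
definition cf_degree_bounded :: "'a::field fls \<Rightarrow> nat \<Rightarrow> bool" where
  "cf_degree_bounded \<phi> E \<longleftrightarrow> (\<forall>n. cf_rem \<phi> n \<noteq> 0 \<and> fls_subdegree (cf_rem \<phi> n) \<le> int E)"

lemma cf_degree_bounded_frac_inverse:
  "cf_degree_bounded \<phi> E \<Longrightarrow> cf_degree_bounded (fls_frac (inverse \<phi>)) E"
  unfolding cf_degree_bounded_def cf_rem_Suc'[symmetric] by blast

lemma frac_mult_via_frac_inverse:
  fixes Q \<phi> :: "'a::field fls"
  assumes "\<phi> \<noteq> 0" and "fls_is_poly Q"
  obtains S where "fls_is_poly S"
    and "fls_frac (Q * \<phi>) = - \<phi> * (fls_frac (fls_poly_part (Q * \<phi>) * fls_frac (inverse \<phi>)) + S)"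
proof
  let ?P = "fls_poly_part (Q * \<phi>)" and ?\<phi>' = "fls_frac (inverse \<phi>)"
  show "fls_is_poly (fls_poly_part (?P * ?\<phi>') + ?P * fls_poly_part (inverse \<phi>) - Q)"
    by (intro fls_is_poly_add fls_is_poly_diff fls_is_poly_mult fls_is_poly_poly_part assms(2))
  have "fls_frac (Q * \<phi>) = - \<phi> * (?P * inverse \<phi> - Q)"
    using assms(1) unfolding fls_poly_part_def by (simp add: algebra_simps)
  also have "?P * inverse \<phi> - Q
      = fls_frac (?P * ?\<phi>') + (fls_poly_part (?P * ?\<phi>') + ?P * fls_poly_part (inverse \<phi>) - Q)"
    unfolding fls_poly_part_def[of "?P * ?\<phi>'"] fls_poly_part_def[of "inverse \<phi>"]
    by (simp add: algebra_simps)
  finally show "fls_frac (Q * \<phi>) = - \<phi> * (fls_frac (?P * ?\<phi>')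
      + (fls_poly_part (?P * ?\<phi>') + ?P * fls_poly_part (inverse \<phi>) - Q))" .
qed

lemma frac_mult_cf_degree_bounded:
  fixes \<phi> Q :: "'a::field fls"
  assumes "cf_degree_bounded \<phi> E" and "fls_frac \<phi> = \<phi>" and "fls_is_poly Q" and "Q \<noteq> 0"
  shows "fls_frac (Q * \<phi>) \<noteq> 0 \<and> fls_subdegree (fls_frac (Q * \<phi>)) \<le> int E - fls_subdegree Q"
  using assms
proof (induction "nat (- fls_subdegree Q)" arbitrary: Q \<phi> rule: less_induct)
  case less
  let ?\<phi>' = "fls_frac (inverse \<phi>)"
  define P where "P = fls_poly_part (Q * \<phi>)"
  have \<phi>: "\<phi> \<noteq> 0" "fls_subdegree \<phi> \<le> int E"
    using less.prems(1) cf_rem.simps(1) unfolding cf_degree_bounded_def by metis+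
  have \<phi>1: "1 \<le> fls_subdegree \<phi>"
    using fls_subdegree_frac_ge_1[of \<phi>] less.prems(2) \<phi> by simp
  have Q0: "fls_subdegree Q \<le> 0"
    using fls_subdegree_poly_le_0 less.prems(3,4) by blast
  have Q\<phi>: "fls_subdegree (Q * \<phi>) = fls_subdegree Q + fls_subdegree \<phi>"
    using \<phi> less.prems(4) by simp
  show ?case
  proof (cases "P = 0")
    case True
    then have "fls_frac (Q * \<phi>) = Q * \<phi>"
      unfolding P_def fls_poly_part_def by simp
    then show ?thesis
      using Q\<phi> Q0 \<phi> less.prems(4) by simp
  next
    case False
    have P: "fls_subdegree P = fls_subdegree Q + fls_subdegree \<phi>"
      using fls_subdegree_poly_part[OF False[unfolded P_def]] Q\<phi> P_def by simp
    moreover have "fls_subdegree P \<le> 0"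
      using fls_subdegree_poly_le_0[OF fls_is_poly_poly_part False[unfolded P_def]] P_def by simp
    ultimately have "nat (- fls_subdegree P) < nat (- fls_subdegree Q)"
      using \<phi>1 by simp
    then have IH: "fls_frac (P * ?\<phi>') \<noteq> 0"
        "fls_subdegree (fls_frac (P * ?\<phi>')) \<le> int E - fls_subdegree P"
      using less.hyps[of P ?\<phi>'] cf_degree_bounded_frac_inverse[OF less.prems(1)]
        fls_is_poly_poly_part False P_def by auto
    obtain S where S: "fls_is_poly S"
      and "fls_frac (Q * \<phi>) = - \<phi> * (fls_frac (P * ?\<phi>') + S)"
      using frac_mult_via_frac_inverse[OF \<phi>(1) less.prems(3)] unfolding P_def by blast
    then show ?thesis
      using fls_frac_plus_poly[OF IH(1) S] \<phi>(1) P IH(2) by simp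
  qed
qed

lemma cf_rem_eq_0_imp_rational:
  fixes \<phi> :: "'a::field fls"
  assumes "cf_rem \<phi> N = 0"
  shows "\<exists>Q. fls_is_poly Q \<and> Q \<noteq> 0 \<and> fls_is_poly (Q * \<phi>)"
  using assms
proof (induction N arbitrary: \<phi>)
  case 0
  then show ?case
    using fls_is_poly_1 by (intro exI[of _ 1]) (simp add: fls_is_poly_def)
next
  case (Suc N)
  show ?case
  proof (cases "\<phi> = 0")
    case True
    then show ?thesis
      using fls_is_poly_1 by (intro exI[of _ 1]) (simp add: fls_is_poly_def)
  next
    case False
    obtain Q where Q: "fls_is_poly Q" "Q \<noteq> 0" "fls_is_poly (Q * fls_frac (inverse \<phi>))"
      using Suc.IH Suc.prems[unfolded cf_rem_Suc'] by blast
    have "Q * inverse \<phi> = Q * fls_frac (inverse \<phi>) + Q * fls_poly_part (inverse \<phi>)"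
      unfolding fls_poly_part_def by (simp add: algebra_simps)
    then have "fls_is_poly (Q * inverse \<phi>)"
      using Q by (simp add: fls_is_poly_add fls_is_poly_mult fls_is_poly_poly_part)
    moreover have "Q * inverse \<phi> * \<phi> = Q"
      using False by simp
    ultimately show ?thesis
      using Q(1,2) False by (metis mult_eq_0_iff)
  qed
qed

lemma poly_to_fls_nth:
  "poly_to_fls P $$ i = (if i \<le> 0 then Polynomial.coeff P (nat (- i)) else 0)"
proof -
  have "poly_to_fls P $$ i
      = (\<Sum>k\<le>degree P. if i \<le> 0 \<and> k = nat (- i) then Polynomial.coeff P k else 0)"
    unfolding poly_to_fls_def fls_nth_sum by (intro sum.cong) auto
  also have "\<dots> = (if i \<le> 0 then Polynomial.coeff P (nat (- i)) else 0)"
    by (auto simp: coeff_eq_0)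
  finally show ?thesis .
qed

lemma coeff_fls_intpart: "Polynomial.coeff (fls_intpart f) j = f $$ (- int j)"
  unfolding fls_intpart_def coeff_Poly
  by (auto simp del: upt_Suc simp: nth_default_def)

lemma poly_to_fls_intpart: "fls_is_poly f \<Longrightarrow> poly_to_fls (fls_intpart f) = f"
  unfolding fls_is_poly_def by (intro fls_eqI) (auto simp: poly_to_fls_nth coeff_fls_intpart)

lemma degree_fls_intpart_ge:
  "f \<noteq> 0 \<Longrightarrow> fls_subdegree f \<le> 0 \<Longrightarrow> nat (- fls_subdegree f) \<le> degree (fls_intpart f)"
  by (rule le_degree) (simp add: coeff_fls_intpart)

lemma XadicLC_counterexample_frac_mult_ne_0:
  fixes \<theta> :: "'a::field fls"
  assumes "XadicLC_counterexample \<theta>" and "fls_is_poly Q" and "Q \<noteq> 0"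
  shows "fls_frac (Q * (fls_X_inv ^ r * \<theta>)) \<noteq> 0"
proof
  assume zero: "fls_frac (Q * (fls_X_inv ^ r * \<theta>)) = 0"
  define P where "P = fls_intpart Q"
  have PQ: "poly_to_fls P = Q"
    unfolding P_def using assms(2) by (rule poly_to_fls_intpart)
  define g where "g rQ = poly_abs (snd rQ)
    * fls_dist_int (fls_X_inv ^ fst rQ * poly_to_fls (snd rQ) * \<theta>)" for rQ :: "nat \<times> 'a poly"
  have "bdd_below (g ` {(r, Q). Q \<noteq> 0})"
    by (rule bdd_belowI[of _ 0]) (auto simp: g_def poly_abs_def fls_dist_int_def fls_abs_def)
  moreover have "P \<noteq> 0"
    using PQ assms(3) by (auto simp: poly_to_fls_def)
  ultimately have "(INF rQ \<in> {(r, Q). Q \<noteq> 0}. g rQ) \<le> g (r, P)"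
    by (intro cINF_lower) auto
  also have "g (r, P) = 0"
  proof -
    have reorder: "fls_X_inv ^ r * poly_to_fls P * \<theta> = Q * (fls_X_inv ^ r * \<theta>)"
      unfolding PQ by (metis mult.assoc mult.left_commute)
    show ?thesis
      unfolding g_def fst_conv snd_conv reorder fls_dist_int_def zero by (simp add: fls_abs_def)
  qed
  finally show False
    using assms(1) unfolding XadicLC_counterexample_def g_def by simp
qed

lemma counterexample_cf_degree_bounded:
  fixes \<theta> :: "'a::field fls"
  assumes "XadicLC_counterexample \<theta>" and "deficiency_bound \<theta> D"
  shows "cf_degree_bounded (fls_frac (fls_X_inv ^ r * \<theta>)) (D + 1)"
proof -
  define \<phi> where "\<phi> = fls_frac (fls_X_inv ^ r * \<theta>)"
  have nonzero: "cf_rem \<phi> n \<noteq> 0" for n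
  proof
    assume "cf_rem \<phi> n = 0"
    then obtain Q where Q: "fls_is_poly Q" "Q \<noteq> 0" "fls_is_poly (Q * \<phi>)"
      using cf_rem_eq_0_imp_rational by blast
    have "fls_frac (Q * (fls_X_inv ^ r * \<theta>)) = fls_frac (Q * \<phi>)"
      unfolding \<phi>_def using Q(1) by (rule fls_frac_mult_frac[symmetric])
    also have "\<dots> = 0"
      using Q(3) by (simp add: fls_is_poly_iff_frac_eq_0)
    finally show False
      using XadicLC_counterexample_frac_mult_ne_0[OF assms(1) Q(1,2)] by blast
  qed
  have "fls_subdegree (cf_rem \<phi> n) \<le> int (D + 1)" for n
  proof -
    have "cf_exists \<phi> (Suc n)"
      using nonzero unfolding cf_exists_def by simp
    then have "degree (fls_intpart (inverse (cf_rem \<phi> n))) \<le> D + 1"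
      using assms(2) unfolding deficiency_bound_def cf_pq_def \<phi>_def by fastforce
    moreover have "1 \<le> fls_subdegree (cf_rem \<phi> n)"
      using fls_subdegree_frac_ge_1[of "cf_rem \<phi> n"] fls_frac_cf_rem[of \<phi> n] nonzero
      unfolding \<phi>_def by simp
    ultimately show ?thesis
      using degree_fls_intpart_ge[of "inverse (cf_rem \<phi> n)"] nonzero by simp
  qed
  with nonzero show ?thesis
    unfolding cf_degree_bounded_def \<phi>_def by blast
qed

lemma counterexample_frac_mult_bound:
  fixes \<theta> :: "'a::field fls"
  assumes "XadicLC_counterexample \<theta>" and "deficiency_bound \<theta> D"
    and "fls_is_poly Q" and "Q \<noteq> 0"
  shows "fls_frac (Q * (fls_X_inv ^ r * \<theta>)) \<noteq> 0 \<and>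
    fls_subdegree (fls_frac (Q * (fls_X_inv ^ r * \<theta>))) \<le> int (D + 1) - fls_subdegree Q"
  using frac_mult_cf_degree_bounded[OF counterexample_cf_degree_bounded[OF assms(1,2)]
      fls_frac_frac assms(3,4)]
  by (simp add: fls_frac_mult_frac[OF assms(3)])

lemma pdigit_eq_imp_mod_eq:
  "(\<And>l. l < m \<Longrightarrow> pdigit p k l = pdigit p n l) \<Longrightarrow> k mod p ^ m = n mod p ^ m"
proof (induction m)
  case (Suc m)
  then have "k mod p ^ m = n mod p ^ m" and "pdigit p k m = pdigit p n m"
    by simp_all
  then show ?case
    unfolding power_Suc2 mod_mult2_eq by (simp add: pdigit_def)
qed simp

definition digit_diff :: "nat \<Rightarrow> nat \<Rightarrow> nat \<Rightarrow> 'p::prime_card mod_ring" where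
  "digit_diff k n l = of_nat (pdigit CARD('p) k l) - of_nat (pdigit CARD('p) n l)"

lemma digit_diff_eq_0_iff:
  "digit_diff k n l = (0 :: 'p::prime_card mod_ring) \<longleftrightarrow> pdigit CARD('p) k l = pdigit CARD('p) n l"
  by (simp add: digit_diff_def of_nat_eq_iff_cong_CHAR cong_def pdigit_def)

lemma digit_diff_ne_0:
  assumes "k < CARD('p::prime_card) ^ m" and "n < CARD('p) ^ m" and "k \<noteq> n"
  obtains l where "l < m" and "digit_diff k n l \<noteq> (0 :: 'p mod_ring)"
  using pdigit_eq_imp_mod_eq[of m "CARD('p)" k n] assms by (auto simp: digit_diff_eq_0_iff)

lemma gen_digits_diff:
  "gen_digits m C k j - gen_digits m C n j = (\<Sum>l<m. C j l * digit_diff k n l)"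
  unfolding gen_digits_def digit_diff_def by (simp add: sum_subtractf right_diff_distrib)

lemma obtain_support_interval:
  fixes d :: "nat \<Rightarrow> 'a::zero"
  assumes "l0 < m" and "d l0 \<noteq> 0"
  obtains a b where "a \<le> b" and "b < m" and "d a \<noteq> 0" and "d b \<noteq> 0"
    and "\<And>l. l < m \<Longrightarrow> l < a \<or> b < l \<Longrightarrow> d l = 0"
proof -
  define L where "L = {l. l < m \<and> d l \<noteq> 0}"
  have L: "finite L" "L \<noteq> {}"
    using assms unfolding L_def by auto
  then have "Min L \<in> L" "Max L \<in> L" "Min L \<le> Max L"
    by auto
  then show ?thesis
  proof (intro that[of "Min L" "Max L"])
    fix l assume "l < m" and "l < Min L \<or> Max L < l"
    with L(1) show "d l = 0"
      unfolding L_def by (metis (mono_tags) Max_ge Min_le mem_Collect_eq not_le)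
  qed (auto simp: L_def)
qed

lemma I_mat_digit:
  fixes d :: "nat \<Rightarrow> 'a::semiring_1"
  assumes "a < m"
  shows "(\<Sum>l<m. I_mat m (a + 1) l * d l) = d a"
proof -
  have "(\<Sum>l<m. I_mat m (a + 1) l * d l) = (\<Sum>l<m. if l = a then d l else 0)"
    by (intro sum.cong) (auto simp: I_mat_def)
  with assms show ?thesis
    by simp
qed

lemma J_mat_digit:
  fixes d :: "nat \<Rightarrow> 'a::semiring_1"
  assumes "b < m"
  shows "(\<Sum>l<m. J_mat m (m - b) l * d l) = d b"
proof -
  have "(\<Sum>l<m. J_mat m (m - b) l * d l) = (\<Sum>l<m. if l = b then d l else 0)"
    using assms by (intro sum.cong) (auto simp: J_mat_def)
  with assms show ?thesis
    by simp
qed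

lemma p_norm_ge:
  fixes x :: "nat \<Rightarrow> nat \<Rightarrow> 'a::zero"
  assumes "1 \<le> p" and "1 \<le> j1" "x 1 j1 \<noteq> 0" and "1 \<le> j2" "x 2 j2 \<noteq> 0" and "1 \<le> j3" "x 3 j3 \<noteq> 0"
  shows "1 / real p ^ (j1 + j2 + j3) \<le> p_norm p x"
proof -
  let ?least = "\<lambda>i. LEAST j. 1 \<le> j \<and> x i j \<noteq> 0"
  have "\<not> (\<exists>i\<in>{1, 2, 3::nat}. \<forall>j\<ge>1. x i j = 0)"
    using assms(2-7) by blast
  then have "p_norm p x = 1 / real p ^ (\<Sum>i\<in>{1, 2, 3}. ?least i)"
    unfolding p_norm_def by (rule if_not_P)
  also have "(\<Sum>i\<in>{1, 2, 3}. ?least i) = ?least 1 + ?least 2 + ?least 3"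
    by simp
  finally have "p_norm p x = 1 / real p ^ (?least 1 + ?least 2 + ?least 3)" .
  moreover have "?least 1 + ?least 2 + ?least 3 \<le> j1 + j2 + j3"
    using assms(2-7) by (intro add_mono Least_le) auto
  ultimately show ?thesis
    using assms(1) by (simp add: divide_left_mono power_increasing)
qed

(* The polynomial \<Sigma> d\<^sub>l X^(l-a) over a \<le> l \<le> b; recall that fls_X_inv plays the role of X. *)
definition digit_fls :: "(nat \<Rightarrow> 'a::comm_ring_1) \<Rightarrow> nat \<Rightarrow> nat \<Rightarrow> 'a fls" where
  "digit_fls d a b = (\<Sum>l\<in>{a..b}. fls_const (d l) * fls_X_inv ^ (l - a))"

lemma digit_fls_nth:
  "digit_fls d a b $$ i = (\<Sum>l\<in>{a..b}. if i = - int (l - a) then d l else 0)"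
  unfolding digit_fls_def fls_nth_sum by (intro sum.cong) auto

lemma fls_is_poly_digit_fls: "fls_is_poly (digit_fls d a b)"
  unfolding fls_is_poly_def digit_fls_nth by auto

lemma digit_fls_nth_0: "a \<le> b \<Longrightarrow> digit_fls d a b $$ 0 = d a"
proof -
  assume "a \<le> b"
  have "digit_fls d a b $$ 0 = (\<Sum>l\<in>{a..b}. if l = a then d l else 0)"
    unfolding digit_fls_nth by (intro sum.cong) auto
  with \<open>a \<le> b\<close> show ?thesis
    by simp
qed

lemma fls_subdegree_digit_fls_ge:
  "digit_fls d a b \<noteq> 0 \<Longrightarrow> int a - int b \<le> fls_subdegree (digit_fls d a b)"
  by (intro fls_subdegree_geI) (auto simp: digit_fls_nth intro!: sum.neutral)

lemma digit_fls_mult_nth: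
  "(digit_fls d a b * (fls_X_inv ^ a * \<theta>)) $$ j = (\<Sum>l\<in>{a..b}. d l * \<theta> $$ (j + int l))"
proof -
  have "digit_fls d a b * (fls_X_inv ^ a * \<theta>) = (\<Sum>l\<in>{a..b}. fls_const (d l) * fls_shift (int l) \<theta>)"
    unfolding digit_fls_def sum_distrib_right
  proof (intro sum.cong refl)
    fix l assume "l \<in> {a..b}"
    then have "fls_X_inv ^ (l - a) * (fls_X_inv ^ a * \<theta>) = fls_X_inv ^ l * \<theta>"
      by (simp add: mult.assoc[symmetric] power_add[symmetric])
    then show "fls_const (d l) * fls_X_inv ^ (l - a) * (fls_X_inv ^ a * \<theta>)
        = fls_const (d l) * fls_shift (int l) \<theta>"
      by (simp only: mult.assoc fls_X_inv_power_times_conv_shift(1))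
  qed
  then show ?thesis
    by (simp add: fls_nth_sum)
qed

lemma H_mat_digit_ne_0:
  fixes \<theta> :: "'a::field fls" and d :: "nat \<Rightarrow> 'a"
  assumes "XadicLC_counterexample \<theta>" and "deficiency_bound \<theta> D"
    and "a \<le> b" and "b < m" and "d a \<noteq> 0"
    and support: "\<And>l. l < m \<Longrightarrow> l < a \<or> b < l \<Longrightarrow> d l = 0"
  obtains j where "1 \<le> j" and "j \<le> D + 1 + b - a" and "(\<Sum>l<m. H_mat m \<theta> j l * d l) \<noteq> 0"
proof -
  let ?Q = "digit_fls d a b" and ?\<psi> = "fls_X_inv ^ a * \<theta>"
  have "?Q $$ 0 \<noteq> 0"
    using digit_fls_nth_0[of a b d] assms(3,5) by simp
  then have "?Q \<noteq> 0"
    by auto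
  then have bound: "fls_frac (?Q * ?\<psi>) \<noteq> 0"
      "fls_subdegree (fls_frac (?Q * ?\<psi>)) \<le> int (D + 1) - fls_subdegree ?Q"
    using counterexample_frac_mult_bound[OF assms(1,2) fls_is_poly_digit_fls] by auto
  define v where "v = fls_subdegree (fls_frac (?Q * ?\<psi>))"
  have v1: "1 \<le> v"
    unfolding v_def using fls_subdegree_frac_ge_1[OF bound(1)] .
  have "v \<le> int D + 1 + int b - int a"
    using bound(2) fls_subdegree_digit_fls_ge[OF \<open>?Q \<noteq> 0\<close>] unfolding v_def by simp
  then have "nat v \<le> D + 1 + b - a"
    using assms(3) by linarith
  have "(\<Sum>l<m. H_mat m \<theta> (nat v) l * d l) = (\<Sum>l<m. d l * \<theta> $$ (v + int l))"
    using v1 by (intro sum.cong) (auto simp: H_mat_def)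
  also have "\<dots> = (\<Sum>l\<in>{a..b}. d l * \<theta> $$ (v + int l))"
    using assms(4) by (intro sum.mono_neutral_right) (auto intro!: support)
  also have "\<dots> = fls_frac (?Q * ?\<psi>) $$ v"
    using v1 by (simp add: digit_fls_mult_nth)
  also have "\<dots> \<noteq> 0"
    unfolding v_def using bound(1) by (rule nth_fls_subdegree_nonzero)
  finally have "(\<Sum>l<m. H_mat m \<theta> (nat v) l * d l) \<noteq> 0" .
  moreover have "1 \<le> nat v"
    using v1 by simp
  ultimately show ?thesis
    using \<open>nat v \<le> D + 1 + b - a\<close> by (intro that) auto
qed

lemma net_point_diff_p_norm_gt:
  fixes \<theta> :: "'p::prime_card mod_ring fls"
  assumes X: "XadicLC_counterexample \<theta>" and D: "deficiency_bound \<theta> D"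
    and "k < n" and "n < CARD('p) ^ m"
  shows "1 / real CARD('p) ^ (m + D + 3)
    < p_norm CARD('p) (digit_ominus (net_point m \<theta> k) (net_point m \<theta> n))"
proof -
  define x where "x = digit_ominus (net_point m \<theta> k) (net_point m \<theta> n)"
  define d :: "nat \<Rightarrow> 'p mod_ring" where "d = digit_diff k n"
  have x: "x 1 j = (\<Sum>l<m. I_mat m j l * d l)" "x 2 j = (\<Sum>l<m. H_mat m \<theta> j l * d l)"
    "x 3 j = (\<Sum>l<m. J_mat m j l * d l)" for j
    unfolding x_def d_def digit_ominus_def net_point_def by (simp_all add: gen_digits_diff)
  have "k < CARD('p) ^ m"
    using assms(3,4) by simp
  then obtain l0 where "l0 < m" "d l0 \<noteq> 0"
    using digit_diff_ne_0[where 'p = 'p, OF _ assms(4)] assms(3) unfolding d_def by blast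
  then obtain a b where ab: "a \<le> b" "b < m" "d a \<noteq> 0" "d b \<noteq> 0"
    and support: "\<And>l. l < m \<Longrightarrow> l < a \<or> b < l \<Longrightarrow> d l = 0"
    by (rule obtain_support_interval[where d = d]) blast
  obtain j2 where "1 \<le> j2" "j2 \<le> D + 1 + b - a" "x 2 j2 \<noteq> 0"
    using H_mat_digit_ne_0[where d = d, OF X D ab(1-3) support] x(2) by metis
  have "x 1 (a + 1) \<noteq> 0" and "x 3 (m - b) \<noteq> 0"
    unfolding x using ab I_mat_digit[of a m d] J_mat_digit[of b m d] by simp_all
  have p: "1 < real CARD('p)"
    using nontriv[where 'a = 'p] by simp
  have "(a + 1) + j2 + (m - b) < m + D + 3"
    using \<open>j2 \<le> D + 1 + b - a\<close> ab(1,2) by linarith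
  then have "real CARD('p) ^ ((a + 1) + j2 + (m - b)) < real CARD('p) ^ (m + D + 3)"
    using p by (rule power_strict_increasing)
  then have "1 / real CARD('p) ^ (m + D + 3) < 1 / real CARD('p) ^ ((a + 1) + j2 + (m - b))"
    using p by (intro divide_strict_left_mono) auto
  also have "\<dots> \<le> p_norm CARD('p) x"
    using \<open>x 1 (a + 1) \<noteq> 0\<close> \<open>1 \<le> j2\<close> \<open>x 2 j2 \<noteq> 0\<close> \<open>x 3 (m - b) \<noteq> 0\<close> ab(2)
    by (intro p_norm_ge) simp_all
  finally show ?thesis
    unfolding x_def .
qed

theorem lemma6:
  fixes \<theta> :: "'p::prime_card mod_ring fls" and D m :: nat
  assumes "XadicLC_counterexample \<theta>"
    and "deficiency_bound \<theta> D"
    and "m > D"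
  shows "Min {p_norm CARD('p) (digit_ominus (net_point m \<theta> k) (net_point m \<theta> n)) | k n.
                k < n \<and> n < CARD('p) ^ m}
         > 1 / real CARD('p) ^ (m + D + 3)"
proof -
  let ?N = "CARD('p) ^ m"
  let ?dist = "\<lambda>k n. p_norm CARD('p) (digit_ominus (net_point m \<theta> k) (net_point m \<theta> n))"
  have "{?dist k n | k n. k < n \<and> n < ?N} \<subseteq> {?dist k n | k n. k < ?N \<and> n < ?N}"
    by (blast intro: less_trans)
  then have "finite {?dist k n | k n. k < n \<and> n < ?N}"
    by (rule finite_subset) (rule finite_image_set2; simp)
  moreover have "1 < ?N"
    using nontriv[where 'a = 'p] assms(3) by (intro one_less_power) auto
  then have "?dist 0 1 \<in> {?dist k n | k n. k < n \<and> n < ?N}"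
    by blast
  ultimately show ?thesis
    using net_point_diff_p_norm_gt[OF assms(1,2)] by (subst Min_gr_iff) auto
qed

end
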